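(* Let $d>4$ and let $(X_n)_{n\ge1}$ be the simple random walk on the free group $F_d$ (i.e. the $\mu_d$-random walk with $\mu_d$ uniform on the $2d$ generators and their inverses). There exists $j_0$ such that with positive probability, for every $j>j_0$, the number of distinct reduced words of length $j$ that occur as a length-$j$ prefix of the reduced form of some $X_n$ is at most $\log_2 j$.
   Context: A $\mu$-random walk is $X_n=\zeta_1\cdots\zeta_n$ with $\zeta_i$ i.i.d. of law $\mu$; elements of $F_d$ are written as reduced words. *)

theory Defs
  imports "HOL-Probability.Probability"
begin

text \<open>Letters of the free group F_d: a generator index i < d together with a flag
  (False = generator a_i, True = its inverse a_i^{-1}). Elements of F_d are reduced
  words, i.e. lists of letters with no adjacent letter/inverse pair.\<close>

type_synonym letter = "nat \<times> bool"

definition letters :: "nat \<Rightarrow> letter set" where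
  "letters d = {x. fst x < d}"

definition inv_letter :: "letter \<Rightarrow> letter" where
  "inv_letter x = (fst x, \<not> snd x)"

definition mult_letter :: "letter list \<Rightarrow> letter \<Rightarrow> letter list" where
  "mult_letter w x = (if w \<noteq> [] \<and> last w = inv_letter x then butlast w else w @ [x])"

definition reduced_product :: "letter list \<Rightarrow> letter list" where
  "reduced_product zs = foldl mult_letter [] zs"

definition mu :: "nat \<Rightarrow> letter pmf" where
  "mu d = pmf_of_set (letters d)"

definition walk_space :: "nat \<Rightarrow> letter stream measure" where
  "walk_space d = stream_space (measure_pmf (mu d))"

definition X :: "nat \<Rightarrow> letter stream \<Rightarrow> letter list" where
  "X n \<omega> = reduced_product (stake n \<omega>)"

definition prefixes_of_length :: "nat \<Rightarrow> letter stream \<Rightarrow> letter list set" where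
  "prefixes_of_length j \<omega> = {take j (X n \<omega>) | n. n \<ge> 1 \<and> length (X n \<omega>) \<ge> j}"

end

theory Submission
  imports Defs "HOL-Library.Sublist"
begin

text \<open>
  Call a step of the walk a downcrossing of level j if it shortens the reduced word from
  length j to j - 1. The length-j prefix of the reduced word can only change after such a
  step, so at most one more distinct prefix of length j occurs than there are downcrossings.

  The reduced word loses a letter with probability 1/(2d) and gains one with probability
  (2d - 1)/(2d), so it ever gets one letter shorter with probability r = 1/(2d - 1), and from
  length |w| \<ge> j it returns to length j - 1 with probability r^(|w| - j + 1). Accordingly
  r^((k - c) + (|w| - j)), with c the number of downcrossings so far, is a
  supermartingale, and at least k downcrossings happen with probability at most r^k.
  For k = \<lfloor>log2 j\<rfloor> and d \<ge> 3 this is at most 4/j^2, a summable bound, so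
  with positive probability no level beyond some j0 sees that many downcrossings.
\<close>

lemma finite_subset_UN_mono:
  fixes A :: "nat \<Rightarrow> 'a set"
  assumes "finite S" "S \<subseteq> (\<Union>N. A N)" "mono A"
  obtains N where "S \<subseteq> A N"
proof -
  have "A m \<subseteq> A n \<or> A n \<subseteq> A m" for m n
    using nat_le_linear[of m n] monoD[OF \<open>mono A\<close>] by blast
  then have "subset.chain UNIV (range A)"
    by (auto simp: subset_chain_def)
  moreover have "S \<subseteq> \<Union>(range A)"
    using assms(2) by simp
  ultimately obtain B where "B \<in> range A" "S \<subseteq> B"
    using finite_subset_Union_chain[OF assms(1)] by blast
  then show ?thesis
    using that by blast
qed

text \<open>The second disjunct is the case of an infinite union, whose card is 0.\<close>

lemma real_card_UN_mono_le_iff: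
  fixes A :: "nat \<Rightarrow> 'a set"
  assumes "mono A" and "\<And>N. finite (A N)" and "y \<ge> 0"
  shows "real (card (\<Union>N. A N)) \<le> y \<longleftrightarrow>
    (\<forall>N. real (card (A N)) \<le> y) \<or> (\<forall>M. \<exists>N. M \<le> card (A N))"
proof (cases "finite (\<Union>N. A N)")
  case True
  then obtain N where "(\<Union>N. A N) \<subseteq> A N"
    using finite_subset_UN_mono[OF _ _ \<open>mono A\<close>] by blast
  then have "(\<Union>N. A N) = A N"
    by blast
  moreover have "card (A n) \<le> card (A N)" for n
    using \<open>(\<Union>N. A N) = A N\<close> assms(2) by (metis UN_upper UNIV_I card_mono)
  ultimately show ?thesis
    by (metis not_less_eq_eq of_nat_le_iff order.trans)
next
  case False
  have "\<exists>N. M \<le> card (A N)" for M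
  proof -
    obtain T where T: "T \<subseteq> (\<Union>N. A N)" "finite T" "card T = M"
      using infinite_arbitrarily_large[OF False] by blast
    then obtain N where "T \<subseteq> A N"
      using finite_subset_UN_mono[OF _ _ \<open>mono A\<close>] by blast
    then show ?thesis
      using T assms(2) card_mono by blast
  qed
  then show ?thesis
    using False \<open>y \<ge> 0\<close> by simp
qed

lemma sum_if_eq_delta:
  assumes "finite L"
  shows "(\<Sum>x\<in>L. if x = x0 then a else b) = real (card L) * b + (if x0 \<in> L then a - b else 0)"
proof -
  have "(\<Sum>x\<in>L. if x = x0 then a else b) = (\<Sum>x\<in>L. b + (if x = x0 then a - b else 0))"
    by (rule sum.cong) auto
  then show ?thesis
    using assms by (simp add: sum.distrib)
qed

lemma measurable_stake_comp:
  assumes "\<And>xs. F xs \<in> space N"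
  shows "(\<lambda>\<omega>. F (stake n \<omega>)) \<in> stream_space (measure_pmf (p :: 'a::countable pmf)) \<rightarrow>\<^sub>M N"
proof -
  have "sets (stream_space (measure_pmf p)) = sets (stream_space (count_space UNIV))"
    by (rule sets_stream_space_cong) simp
  then have "stake n \<in> stream_space (measure_pmf p) \<rightarrow>\<^sub>M count_space UNIV"
    using measurable_stake[of n] measurable_cong_sets by blast
  moreover have "F \<in> count_space UNIV \<rightarrow>\<^sub>M N"
    using assms by auto
  ultimately show ?thesis
    using measurable_compose by blast
qed

lemma nn_integral_foldl_stake_le:
  fixes p :: "'a::countable pmf" and V :: "'s \<Rightarrow> ennreal"
  assumes superharmonic: "\<And>s. (\<integral>\<^sup>+x. V (f s x) \<partial>p) \<le> V s"
  shows "(\<integral>\<^sup>+\<omega>. V (foldl f s (stake n \<omega>)) \<partial>stream_space p) \<le> V s"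
proof (induction n arbitrary: s)
  case 0
  interpret prob_space "stream_space (measure_pmf p)"
    by (rule prob_space.prob_space_stream_space[OF prob_space_measure_pmf])
  show ?case
    by (simp add: emeasure_space_1)
next
  case (Suc n)
  have "(\<integral>\<^sup>+\<omega>. V (foldl f s (stake (Suc n) \<omega>)) \<partial>stream_space p)
      = (\<integral>\<^sup>+x. (\<integral>\<^sup>+\<omega>. V (foldl f (f s x) (stake n \<omega>)) \<partial>stream_space p) \<partial>p)"
    by (subst prob_space.nn_integral_stream_space[OF prob_space_measure_pmf])
      (simp_all add: measurable_stake_comp)
  also have "\<dots> \<le> (\<integral>\<^sup>+x. V (f s x) \<partial>p)"
    by (intro nn_integral_mono Suc.IH)
  also have "\<dots> \<le> V s"
    by (rule superharmonic)
  finally show ?case .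
qed

lemma (in prob_space) summable_prob_tail_union_lt_1:
  assumes "\<And>j. B j \<in> events" and "summable (\<lambda>j. prob (B j))"
  shows "\<exists>j0. prob (\<Union>j\<in>{j0<..}. B j) < 1"
proof -
  obtain j0 where j0: "norm (\<Sum>i. prob (B (i + Suc j0))) < 1"
    using suminf_exist_split[OF zero_less_one assms(2)] le_SucI by blast
  have tail: "summable (\<lambda>i. prob (B (i + Suc j0)))"
    using assms(2) by (rule summable_ignore_initial_segment)
  have "{j0<..} = range (\<lambda>i. i + Suc j0)"
  proof (rule set_eqI)
    show "j \<in> {j0<..} \<longleftrightarrow> j \<in> range (\<lambda>i. i + Suc j0)" for j
      by (simp add: image_iff) presburger
  qed
  then have "(\<Union>j\<in>{j0<..}. B j) = (\<Union>i. B (i + Suc j0))"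
    by simp
  then have "prob (\<Union>j\<in>{j0<..}. B j) \<le> (\<Sum>i. prob (B (i + Suc j0)))"
    using finite_measure_subadditive_countably[OF _ tail] assms(1) by auto
  then show ?thesis
    using j0 by (intro exI[of _ j0]) (auto simp: abs_less_iff)
qed

lemma letters_eq: "letters d = {..<d} \<times> UNIV"
  by (auto simp: letters_def)

lemma finite_letters: "finite (letters d)"
  and card_letters: "card (letters d) = 2 * d"
  by (simp_all add: letters_eq card_cartesian_product)

lemma inv_letter_inv_letter [simp]: "inv_letter (inv_letter x) = x"
  by (simp add: inv_letter_def)

lemma length_mult_letter:
  "length (mult_letter w x)
    = (if w \<noteq> [] \<and> last w = inv_letter x then length w - 1 else Suc (length w))"
  by (simp add: mult_letter_def)

lemma take_mult_letter:
  assumes "j \<le> length w" and "j \<le> length (mult_letter w x)"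
  shows "take j (mult_letter w x) = take j w"
proof (cases "w \<noteq> [] \<and> last w = inv_letter x")
  case True
  then have "j < length w"
    using assms length_mult_letter[of w x] by (cases w) auto
  then show ?thesis
    using True by (simp add: mult_letter_def take_butlast)
qed (use assms in \<open>auto simp: mult_letter_def\<close>)

lemma reduced_product_snoc: "reduced_product (zs @ [x]) = mult_letter (reduced_product zs) x"
  by (simp add: reduced_product_def)

section \<open>Downcrossings and prefixes\<close>

fun downcross_step :: "nat \<Rightarrow> letter list \<times> nat \<Rightarrow> letter \<Rightarrow> letter list \<times> nat" where
  "downcross_step j (w, c) x =
     (mult_letter w x, if length w = j \<and> w \<noteq> [] \<and> last w = inv_letter x then Suc c else c)"

definition downcross_state :: "nat \<Rightarrow> letter list \<Rightarrow> letter list \<times> nat" where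
  "downcross_state j zs = foldl (downcross_step j) ([], 0) zs"

lemma fst_foldl_downcross_step: "fst (foldl (downcross_step j) s zs) = foldl mult_letter (fst s) zs"
  by (induction zs arbitrary: s) (auto simp: prod.case_eq_if)

lemma snd_downcross_step_ge: "snd s \<le> snd (downcross_step j s x)"
  by (cases s) auto

lemma snd_foldl_downcross_step_ge: "snd s \<le> snd (foldl (downcross_step j) s zs)"
proof (induction zs arbitrary: s)
  case (Cons x zs)
  show ?case
    using le_trans[OF snd_downcross_step_ge Cons.IH] by simp
qed simp

lemma snd_downcross_state_append_ge:
  "snd (downcross_state j zs) \<le> snd (downcross_state j (zs @ ys))"
  by (simp add: downcross_state_def snd_foldl_downcross_step_ge)

lemma fst_downcross_state: "fst (downcross_state j zs) = reduced_product zs"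
  by (simp add: downcross_state_def reduced_product_def fst_foldl_downcross_step)

lemma downcross_state_snoc:
  "downcross_state j (zs @ [x]) = downcross_step j (downcross_state j zs) x"
  by (simp add: downcross_state_def)

definition prefix_set :: "nat \<Rightarrow> letter list \<Rightarrow> letter list set" where
  "prefix_set j zs = {take j (reduced_product ys) | ys.
     prefix ys zs \<and> ys \<noteq> [] \<and> j \<le> length (reduced_product ys)}"

lemma prefix_set_Nil: "prefix_set j [] = {}"
  by (simp add: prefix_set_def)

lemma prefix_set_snoc:
  "prefix_set j (zs @ [x]) = prefix_set j zs \<union>
     (if j \<le> length (reduced_product (zs @ [x])) then {take j (reduced_product (zs @ [x]))} else {})"
  unfolding prefix_set_def by auto

lemma finite_prefix_set: "finite (prefix_set j zs)"
proof -
  have "prefix_set j zs \<subseteq> (\<lambda>ys. take j (reduced_product ys)) ` set (prefixes zs)"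
    unfolding prefix_set_def by auto
  then show ?thesis
    by (rule finite_subset) simp
qed

lemma card_prefix_set_le_downcrossings:
  assumes "j \<ge> 1"
  shows "card (prefix_set j zs)
    \<le> snd (downcross_state j zs) + (if j \<le> length (reduced_product zs) then 1 else 0)"
proof (induction zs rule: rev_induct)
  case Nil
  then show ?case
    by (simp add: prefix_set_Nil)
next
  case (snoc x zs)
  define w where "w = reduced_product zs"
  have w': "reduced_product (zs @ [x]) = mult_letter w x"
    by (simp add: w_def reduced_product_snoc)
  have state: "downcross_state j (zs @ [x]) = downcross_step j (w, snd (downcross_state j zs)) x"
    by (metis downcross_state_snoc fst_downcross_state prod.collapse w_def)
  have count_mono: "snd (downcross_state j zs) \<le> snd (downcross_state j (zs @ [x]))"
    unfolding state by simp
  show ?case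
  proof (cases "j \<le> length w")
    case long: True
    then have "zs \<noteq> []"
      using assms by (auto simp: w_def reduced_product_def)
    then have old: "take j w \<in> prefix_set j zs"
      using long unfolding prefix_set_def w_def by blast
    show ?thesis
    proof (cases "j \<le> length (mult_letter w x)")
      case True
      then have "prefix_set j (zs @ [x]) = prefix_set j zs"
        using old take_mult_letter[OF long True] by (auto simp: prefix_set_snoc w')
      then show ?thesis
        using snoc.IH count_mono long True by (simp add: w' w_def[symmetric])
    next
      case False
      \<comment> \<open>the word drops from length j to j - 1: this is a downcrossing\<close>
      then have "w \<noteq> [] \<and> last w = inv_letter x" and "length w = j"
        using long length_mult_letter[of w x] by (auto split: if_splits)
      then have "snd (downcross_state j (zs @ [x])) = Suc (snd (downcross_state j zs))"
        unfolding state by simp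
      moreover have "prefix_set j (zs @ [x]) = prefix_set j zs"
        using False by (simp add: prefix_set_snoc w')
      ultimately show ?thesis
        using snoc.IH long False by (simp add: w' w_def[symmetric])
    qed
  next
    case short: False
    have "card (prefix_set j (zs @ [x]))
        \<le> card (prefix_set j zs) + (if j \<le> length (mult_letter w x) then 1 else 0)"
      by (auto simp: prefix_set_snoc w' finite_prefix_set card_insert_if)
    then show ?thesis
      using snoc.IH short count_mono by (simp add: w' w_def[symmetric])
  qed
qed

lemma prefix_stake_iff: "prefix ys (stake N \<omega>) \<longleftrightarrow> (\<exists>n\<le>N. ys = stake n \<omega>)"
proof
  assume "prefix ys (stake N \<omega>)"
  then obtain zs where "stake N \<omega> = ys @ zs"
    by (auto simp: prefix_def)
  then have "length ys \<le> N" and "ys = take (length ys) (stake N \<omega>)"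
    by (metis le_add1 length_append length_stake, simp)
  then show "\<exists>n\<le>N. ys = stake n \<omega>"
    by (auto simp: take_stake min_absorb1)
next
  assume "\<exists>n\<le>N. ys = stake n \<omega>"
  then show "prefix ys (stake N \<omega>)"
    by (metis le_add_diff_inverse prefixI stake_add)
qed

lemma prefix_set_stake:
  "prefix_set j (stake N \<omega>) = {take j (X n \<omega>) | n. 1 \<le> n \<and> n \<le> N \<and> j \<le> length (X n \<omega>)}"
proof -
  have "stake n \<omega> \<noteq> [] \<longleftrightarrow> 1 \<le> n" for n
    by (cases n) auto
  then show ?thesis
    unfolding prefix_set_def prefix_stake_iff X_def by blast
qed

lemma prefixes_of_length_eq_UN: "prefixes_of_length j \<omega> = (\<Union>N. prefix_set j (stake N \<omega>))"
  unfolding prefixes_of_length_def prefix_set_stake by auto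

lemma mono_prefix_set_stake: "mono (\<lambda>N. prefix_set j (stake N \<omega>))"
  unfolding mono_def prefix_set_stake by auto

lemma exists_downcrossings_ge:
  assumes "j \<ge> 1" and "k < card (prefixes_of_length j \<omega>)"
  shows "\<exists>N. k \<le> snd (downcross_state j (stake N \<omega>))"
proof -
  have "finite (prefixes_of_length j \<omega>)"
    using assms(2) card.infinite by fastforce
  moreover have "prefixes_of_length j \<omega> \<subseteq> (\<Union>N. prefix_set j (stake N \<omega>))"
    by (simp add: prefixes_of_length_eq_UN)
  ultimately obtain N where N: "prefixes_of_length j \<omega> \<subseteq> prefix_set j (stake N \<omega>)"
    using finite_subset_UN_mono[OF _ _ mono_prefix_set_stake] by blast
  have "card (prefixes_of_length j \<omega>) \<le> card (prefix_set j (stake N \<omega>))"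
    using N finite_prefix_set by (rule card_mono[rotated])
  also have "\<dots> \<le> snd (downcross_state j (stake N \<omega>)) + 1"
    using card_prefix_set_le_downcrossings[OF assms(1), of "stake N \<omega>"] by (simp split: if_splits)
  finally have "k \<le> snd (downcross_state j (stake N \<omega>))"
    using assms(2) by linarith
  then show ?thesis
    by blast
qed

lemma prob_space_walk_space: "prob_space (walk_space d)"
  unfolding walk_space_def by (rule prob_space.prob_space_stream_space[OF prob_space_measure_pmf])

lemma measurable_walk_space_stake:
  assumes "\<And>xs. F xs \<in> space N"
  shows "(\<lambda>\<omega>. F (stake n \<omega>)) \<in> walk_space d \<rightarrow>\<^sub>M N"
  unfolding walk_space_def using assms by (rule measurable_stake_comp)

lemma pred_card_prefixes_of_length_le:
  assumes "y \<ge> 0"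
  shows "Measurable.pred (walk_space d) (\<lambda>\<omega>. real (card (prefixes_of_length j \<omega>)) \<le> y)"
proof -
  have [measurable]:
    "Measurable.pred (walk_space d) (\<lambda>\<omega>. real (card (prefix_set j (stake N \<omega>))) \<le> y)"
    "Measurable.pred (walk_space d) (\<lambda>\<omega>. M \<le> card (prefix_set j (stake N \<omega>)))" for N M
    by (rule measurable_walk_space_stake; simp)+
  show ?thesis
    unfolding prefixes_of_length_eq_UN
    by (subst real_card_UN_mono_le_iff[OF mono_prefix_set_stake finite_prefix_set assms]) measurable
qed

lemma pred_downcrossings_ge [measurable]:
  "Measurable.pred (walk_space d) (\<lambda>\<omega>. k \<le> snd (downcross_state j (stake N \<omega>)))"
  by (rule measurable_walk_space_stake) simp

section \<open>A supermartingale for downcrossings\<close>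

definition backtrack_prob :: "nat \<Rightarrow> real" where
  "backtrack_prob d = 1 / (2 * real d - 1)"

lemma backtrack_prob_pos: "d \<ge> 1 \<Longrightarrow> backtrack_prob d > 0"
  by (simp add: backtrack_prob_def)

lemma backtrack_prob_le_1: "d \<ge> 1 \<Longrightarrow> backtrack_prob d \<le> 1"
  by (simp add: backtrack_prob_def)

lemma backtrack_prob_harmonic:
  assumes "d \<ge> 1" and "e \<ge> 1"
  shows "(2 * real d - 1) * backtrack_prob d ^ (e + 1) + backtrack_prob d ^ (e - 1)
    = 2 * real d * backtrack_prob d ^ e"
proof -
  define r where "r = backtrack_prob d"
  define a where "a = r ^ (e - 1)"
  have "(2 * real d - 1) * r = 1"
    using assms(1) by (simp add: r_def backtrack_prob_def)
  then have r: "2 * real d * r = 1 + r"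
    by (simp add: algebra_simps)
  obtain m where "e = Suc m"
    using assms(2) by (cases e) auto
  then have "r ^ (e + 1) = a * r * r" and "r ^ e = a * r"
    by (simp_all add: a_def)
  then have "(2 * real d - 1) * r ^ (e + 1) + r ^ (e - 1) = a * (2 * real d * r) * r - a * r * r + a"
    by (simp add: a_def algebra_simps)
  also have "\<dots> = 2 * real d * r ^ e"
    using r \<open>r ^ e = a * r\<close> by (simp add: algebra_simps)
  finally show ?thesis
    by (simp add: r_def)
qed

fun downcross_potential :: "nat \<Rightarrow> nat \<Rightarrow> nat \<Rightarrow> letter list \<times> nat \<Rightarrow> real" where
  "downcross_potential d k j (w, c) =
     (if k \<le> c then 1 else backtrack_prob d ^ ((k - c) + (length w - j)))"

lemma downcross_potential_nonneg: "d \<ge> 1 \<Longrightarrow> 0 \<le> downcross_potential d k j s"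
  using backtrack_prob_pos[of d] by (cases s) (simp add: order_less_imp_le)

lemma downcross_potential_saturated: "k \<le> snd s \<Longrightarrow> downcross_potential d k j s = 1"
  by (cases s) simp

lemma downcross_potential_step_long:
  assumes "j \<ge> 1" and "j \<le> length w" and "c < k"
  defines "e \<equiv> (k - c) + (length w - j)"
  shows "downcross_potential d k j (downcross_step j (w, c) x)
    = backtrack_prob d ^ (if x = inv_letter (last w) then e - 1 else e + 1)"
proof -
  have "w \<noteq> []"
    using assms(1,2) by auto
  have backtrack: "last w = inv_letter x \<longleftrightarrow> x = inv_letter (last w)"
    by auto
  show ?thesis
  proof (cases "x = inv_letter (last w)")
    case True
    then have "mult_letter w x = butlast w"
      using \<open>w \<noteq> []\<close> backtrack by (simp add: mult_letter_def)
    then show ?thesis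
      using True backtrack \<open>w \<noteq> []\<close> assms(2,3) by (auto simp: e_def add.commute)
  next
    case False
    then have "downcross_step j (w, c) x = (w @ [x], c)"
      using backtrack by (simp add: mult_letter_def)
    moreover have "(k - c) + (length (w @ [x]) - j) = e + 1"
      using assms(2) by (simp add: e_def)
    ultimately show ?thesis
      unfolding downcross_potential.simps using False assms(3) by simp
  qed
qed

lemma sum_downcross_potential_step_le:
  assumes "d \<ge> 1" and "j \<ge> 1"
  shows "(\<Sum>x\<in>letters d. downcross_potential d k j (downcross_step j s x))
    \<le> 2 * real d * downcross_potential d k j s"
proof -
  obtain w c where s: "s = (w, c)"
    by fastforce
  consider "k \<le> c" | "c < k" "length w < j" | "c < k" "j \<le> length w"
    by linarith
  then show ?thesis
  proof cases
    case 1
    then have "downcross_potential d k j (downcross_step j s x) = 1" for x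
      by (simp add: s)
    then show ?thesis
      using 1 by (simp add: s card_letters)
  next
    case 2
    then have "length (mult_letter w x) \<le> j" for x
      by (auto simp: mult_letter_def)
    then have "downcross_potential d k j (downcross_step j s x) = backtrack_prob d ^ (k - c)" for x
      using 2 by (simp add: s)
    then show ?thesis
      using 2 by (simp add: s card_letters)
  next
    case 3
    define r where "r = backtrack_prob d"
    define e where "e = (k - c) + (length w - j)"
    have "e \<ge> 1"
      using 3 by (simp add: e_def)
    have "downcross_potential d k j (downcross_step j s x)
        = (if x = inv_letter (last w) then r ^ (e - 1) else r ^ (e + 1))" for x
      unfolding s r_def e_def downcross_potential_step_long[OF assms(2) 3(2,1)] by (rule if_distrib)
    then have "(\<Sum>x\<in>letters d. downcross_potential d k j (downcross_step j s x))
        = (\<Sum>x\<in>letters d. if x = inv_letter (last w) then r ^ (e - 1) else r ^ (e + 1))"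
      by simp
    also have "\<dots> = real (2 * d) * r ^ (e + 1)
        + (if inv_letter (last w) \<in> letters d then r ^ (e - 1) - r ^ (e + 1) else 0)"
      by (simp add: sum_if_eq_delta finite_letters card_letters)
    also have "\<dots> \<le> (2 * real d - 1) * r ^ (e + 1) + r ^ (e - 1)"
    proof -
      have "r ^ (e + 1) \<le> r ^ (e - 1)"
        using backtrack_prob_pos[OF assms(1)] backtrack_prob_le_1[OF assms(1)]
        by (intro power_decreasing) (auto simp: r_def)
      then show ?thesis
        by (auto simp: algebra_simps)
    qed
    also have "\<dots> = 2 * real d * r ^ e"
      unfolding r_def by (rule backtrack_prob_harmonic[OF assms(1) \<open>e \<ge> 1\<close>])
    also have "r ^ e = downcross_potential d k j s"
      using 3 by (simp add: s r_def e_def)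
    finally show ?thesis .
  qed
qed

lemma nn_integral_downcross_potential_le:
  assumes "d \<ge> 1" and "j \<ge> 1"
  shows "(\<integral>\<^sup>+\<omega>. downcross_potential d k j (foldl (downcross_step j) s (stake n \<omega>)) \<partial>walk_space d)
    \<le> downcross_potential d k j s"
  unfolding walk_space_def
proof (rule nn_integral_foldl_stake_le)
  fix s
  have "(0, False) \<in> letters d"
    using assms(1) by (simp add: letters_def)
  then have "letters d \<noteq> {}"
    by blast
  have "(\<integral>\<^sup>+x. downcross_potential d k j (downcross_step j s x) \<partial>mu d)
      = ennreal ((\<Sum>x\<in>letters d. downcross_potential d k j (downcross_step j s x)) / (2 * real d))"
    unfolding mu_def using \<open>letters d \<noteq> {}\<close> assms(1) downcross_potential_nonneg
    by (simp add: nn_integral_pmf_of_set finite_letters card_letters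
        ennreal_of_nat_eq_real_of_nat sum_ennreal sum_nonneg divide_ennreal)
  also have "\<dots> \<le> downcross_potential d k j s"
    using sum_downcross_potential_step_le[OF assms, of k s] assms(1)
    by (intro ennreal_leI) (simp add: divide_le_eq mult.commute)
  finally show "(\<integral>\<^sup>+x. downcross_potential d k j (downcross_step j s x) \<partial>mu d)
      \<le> downcross_potential d k j s" .
qed

lemma prob_downcrossings_ge_le:
  assumes "d \<ge> 1" and "j \<ge> 1"
  shows "measure (walk_space d)
      {\<omega> \<in> space (walk_space d). \<exists>N. k \<le> snd (downcross_state j (stake N \<omega>))}
    \<le> backtrack_prob d ^ k"
proof -
  interpret prob_space "walk_space d"
    by (rule prob_space_walk_space)
  define A where "A N = {\<omega> \<in> space (walk_space d). k \<le> snd (downcross_state j (stake N \<omega>))}" for N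
  have A_sets: "range A \<subseteq> events"
    unfolding A_def by auto
  have "snd (downcross_state j (stake N \<omega>)) \<le> snd (downcross_state j (stake (Suc N) \<omega>))" for N \<omega>
    using snd_downcross_state_append_ge[of j "stake N \<omega>" "[\<omega> !! N]"]
    by (simp add: stake_Suc del: stake.simps)
  then have "incseq A"
    by (intro incseq_SucI) (auto simp: A_def intro: order_trans)
  have "emeasure (walk_space d) (A N) \<le> backtrack_prob d ^ k" for N
  proof -
    have "emeasure (walk_space d) (A N) = (\<integral>\<^sup>+\<omega>. indicator (A N) \<omega> \<partial>walk_space d)"
      using A_sets by (simp add: image_subset_iff)
    also have "\<dots> \<le> (\<integral>\<^sup>+\<omega>. downcross_potential d k j (foldl (downcross_step j) ([], 0) (stake N \<omega>))
        \<partial>walk_space d)"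
      using downcross_potential_nonneg[OF assms(1)] downcross_potential_saturated
      by (intro nn_integral_mono) (auto simp: A_def downcross_state_def indicator_def)
    also have "\<dots> \<le> downcross_potential d k j ([], 0)"
      by (rule nn_integral_downcross_potential_le[OF assms])
    finally show ?thesis
      by (cases k) simp_all
  qed
  then have "emeasure (walk_space d) (\<Union>N. A N) \<le> backtrack_prob d ^ k"
    by (simp add: SUP_emeasure_incseq[OF A_sets \<open>incseq A\<close>, symmetric] SUP_least)
  moreover have "{\<omega> \<in> space (walk_space d). \<exists>N. k \<le> snd (downcross_state j (stake N \<omega>))} = (\<Union>N. A N)"
    by (auto simp: A_def)
  ultimately show ?thesis
    using backtrack_prob_pos[OF assms(1)] by (simp add: emeasure_eq_measure)
qed

section \<open>Summing over the levels\<close>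

lemma quarter_power_floor_log2_le:
  assumes "j \<ge> 1"
  shows "(1 / 4 :: real) ^ nat \<lfloor>log 2 (real j)\<rfloor> \<le> 4 / real j ^ 2"
proof -
  define k where "k = nat \<lfloor>log 2 (real j)\<rfloor>"
  have "log 2 (real j) < real (k + 1)"
    using assms unfolding k_def by linarith
  then have "real j < 2 powr real (k + 1)"
    using assms by (simp add: log_less_iff)
  then have "real j < 2 ^ (k + 1)"
    using powr_realpow[of 2 "k + 1"] by simp
  then have "real j ^ 2 \<le> (2 ^ (k + 1)) ^ 2"
    by (intro power_mono) auto
  also have "\<dots> = (2 ^ 2) ^ (k + 1)"
    by (metis power_mult mult.commute)
  also have "\<dots> = 4 * 4 ^ k"
    by simp
  finally show ?thesis
    using assms by (simp add: k_def[symmetric] power_one_over field_simps)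
qed

definition many_downcrossings :: "nat \<Rightarrow> nat \<Rightarrow> letter stream set" where
  "many_downcrossings d j = {\<omega> \<in> space (walk_space d).
     \<exists>N. nat \<lfloor>log 2 (real j)\<rfloor> \<le> snd (downcross_state j (stake N \<omega>))}"

lemma sets_many_downcrossings: "many_downcrossings d j \<in> sets (walk_space d)"
  unfolding many_downcrossings_def by measurable

lemma prob_many_downcrossings_le:
  assumes "d \<ge> 3" and "j \<ge> 1"
  shows "measure (walk_space d) (many_downcrossings d j) \<le> 4 / real j ^ 2"
proof -
  have "backtrack_prob d \<le> 1 / 4"
    using assms(1) by (simp add: backtrack_prob_def divide_le_eq)
  have "measure (walk_space d) (many_downcrossings d j) \<le> backtrack_prob d ^ nat \<lfloor>log 2 (real j)\<rfloor>"
    unfolding many_downcrossings_def using assms by (intro prob_downcrossings_ge_le) auto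
  also have "\<dots> \<le> (1 / 4) ^ nat \<lfloor>log 2 (real j)\<rfloor>"
    using backtrack_prob_pos[of d] assms(1) \<open>backtrack_prob d \<le> 1 / 4\<close> by (intro power_mono) auto
  also have "\<dots> \<le> 4 / real j ^ 2"
    by (rule quarter_power_floor_log2_le[OF assms(2)])
  finally show ?thesis .
qed

lemma summable_prob_many_downcrossings:
  assumes "d \<ge> 3"
  shows "summable (\<lambda>j. measure (walk_space d) (many_downcrossings d j))"
proof -
  have bound: "norm (measure (walk_space d) (many_downcrossings d j)) \<le> 4 * inverse (real j ^ 2)"
    if "j \<ge> 1" for j
    using prob_many_downcrossings_le[OF assms that] by (simp add: divide_inverse)
  have "summable (\<lambda>j. 4 * inverse (real j ^ 2))"
    by (intro summable_mult inverse_power_summable) simp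
  then show ?thesis
    by (rule summable_comparison_test'[where N = 1]) (rule bound)
qed

lemma exceptional_subset_many_downcrossings:
  "space (walk_space d) -
      {\<omega> \<in> space (walk_space d). \<forall>j > j0. real (card (prefixes_of_length j \<omega>)) \<le> log 2 (real j)}
    \<subseteq> (\<Union>j\<in>{j0<..}. many_downcrossings d j)"
proof
  fix \<omega> assume "\<omega> \<in> space (walk_space d) -
    {\<omega> \<in> space (walk_space d). \<forall>j > j0. real (card (prefixes_of_length j \<omega>)) \<le> log 2 (real j)}"
  then obtain j where \<omega>: "\<omega> \<in> space (walk_space d)" and "j0 < j"
    and card: "log 2 (real j) < real (card (prefixes_of_length j \<omega>))"
    by (auto simp: not_le)
  then have "j \<ge> 1"
    by simp
  then have "real (nat \<lfloor>log 2 (real j)\<rfloor>) \<le> log 2 (real j)"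
    by simp
  then have "nat \<lfloor>log 2 (real j)\<rfloor> < card (prefixes_of_length j \<omega>)"
    using card by (metis of_nat_less_iff order.strict_trans1)
  then have "\<omega> \<in> many_downcrossings d j"
    using exists_downcrossings_ge[OF \<open>j \<ge> 1\<close>] \<omega> by (simp add: many_downcrossings_def)
  then show "\<omega> \<in> (\<Union>j\<in>{j0<..}. many_downcrossings d j)"
    using \<open>j0 < j\<close> by blast
qed

lemma sets_prefixes_of_length_le_log:
  "{\<omega> \<in> space (walk_space d). \<forall>j > j0. real (card (prefixes_of_length j \<omega>)) \<le> log 2 (real j)}
    \<in> sets (walk_space d)"
proof -
  have "Measurable.pred (walk_space d)
      (\<lambda>\<omega>. j0 < j \<longrightarrow> real (card (prefixes_of_length j \<omega>)) \<le> log 2 (real j))" for j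
    using pred_card_prefixes_of_length_le[where y = "log 2 (real j)" and d = d and j = j]
    by (cases "j0 < j") simp_all
  then show ?thesis
    by (subst pred_def[symmetric]) (rule pred_intros_countable(1))
qed

theorem mainTheorem12:
  fixes d :: nat
  assumes "d > 4"
  shows "\<exists>j0::nat. measure (walk_space d)
            {\<omega> \<in> space (walk_space d).
               \<forall>j > j0. real (card (prefixes_of_length j \<omega>)) \<le> log 2 (real j)} > 0"
proof -
  interpret prob_space "walk_space d"
    by (rule prob_space_walk_space)
  obtain j0 where j0: "prob (\<Union>j\<in>{j0<..}. many_downcrossings d j) < 1"
    using summable_prob_tail_union_lt_1[OF sets_many_downcrossings summable_prob_many_downcrossings]
      assms by fastforce
  define G where "G = {\<omega> \<in> space (walk_space d).
    \<forall>j > j0. real (card (prefixes_of_length j \<omega>)) \<le> log 2 (real j)}"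
  have "G \<in> events"
    unfolding G_def by (rule sets_prefixes_of_length_le_log)
  have "space (walk_space d) - G \<subseteq> (\<Union>j\<in>{j0<..}. many_downcrossings d j)"
    unfolding G_def by (rule exceptional_subset_many_downcrossings)
  moreover have "(\<Union>j\<in>{j0<..}. many_downcrossings d j) \<in> events"
    using sets_many_downcrossings by blast
  ultimately have "prob (space (walk_space d) - G) < 1"
    using finite_measure_mono j0 by (meson le_less_trans)
  then have "prob G > 0"
    using prob_compl[OF \<open>G \<in> events\<close>] by linarith
  then show ?thesis
    unfolding G_def by blast
qed

end
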